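(* Let $\boldsymbol{S}_{\rm B},\boldsymbol{S}_{\rm W}\in\mathbb{R}^{M\times M}$ be the between-class and within-class scatter matrices of a labelled data set (defined in the context), with $\boldsymbol{S}_{\rm W}$ invertible, and let $\mathcal{R}(\boldsymbol{u})=\frac{\boldsymbol{u}^\top\boldsymbol{S}_{\rm B}\boldsymbol{u}}{\boldsymbol{u}^\top\boldsymbol{S}_{\rm W}\boldsymbol{u}}$ for nonzero $\boldsymbol{u}\in\mathbb{R}^M$. Let $\boldsymbol{u}_1,\ldots,\boldsymbol{u}_{n-1}$ ($2\le n\le M$) be the GO-LDA discriminant directions (defined in the context), and let $\boldsymbol{u}_n\in\mathbb{R}^M$ be a solution of $$\max_{\boldsymbol{u}}\ \mathcal{R}(\boldsymbol{u})\quad\text{s.t.}\quad\boldsymbol{u}\perp\boldsymbol{u}_i\ \text{ for all } i=1,\ldots,n-1.$$ Define $\boldsymbol{U}_{n-1}=(\boldsymbol{u}_1\ \cdots\ \boldsymbol{u}_{n-1})\in\mathbb{R}^{M\times(n-1)}$, let $\boldsymbol{B}_{n-1}\in\mathbb{R}^{(n-1)\times M}$ be the matrix whose $i$-th row is $\boldsymbol{u}_i^\top\boldsymbol{S}_{\rm W}^{-1}\boldsymbol{S}_{\rm B}$, and let $\boldsymbol{T}_{n-1}\in\mathbb{R}^{(n-1)\times(n-1)}$ have $(i,j)$ entry $\boldsymbol{u}_i^\top\boldsymbol{S}_{\rm W}^{-1}\boldsymbol{u}_j$. Then $\boldsymbol{u}_n$ is an eigenvector corresponding to the largest eigenvalue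 of the generalised eigenvalue problem $$\left(\boldsymbol{S}_{\rm B}-\boldsymbol{U}_{n-1}\boldsymbol{T}_{n-1}^{-1}\boldsymbol{B}_{n-1}\right)\boldsymbol{u}=\mu\boldsymbol{S}_{\rm W}\boldsymbol{u}.$$
   Context: Given $N$ samples $\boldsymbol{y}_1,\ldots,\boldsymbol{y}_N\in\mathbb{R}^M$ partitioned into $C$ classes, where class $j$ consists of samples $\boldsymbol{y}^j_1,\ldots,\boldsymbol{y}^j_{N_j}$. Let $\bar{\boldsymbol{y}}$ be the overall mean and $\bar{\boldsymbol{y}}_j$ the mean of class $j$. The between-class scatter is $\boldsymbol{S}_{\rm B}=\sum_{j=1}^C(\bar{\boldsymbol{y}}_j-\bar{\boldsymbol{y}})(\bar{\boldsymbol{y}}_j-\bar{\boldsymbol{y}})^\top$ and the within-class scatter is $\boldsymbol{S}_{\rm W}=\sum_{j=1}^C\sum_{k=1}^{N_j}(\boldsymbol{y}^j_k-\bar{\boldsymbol{y}}_j)(\boldsymbol{y}^j_k-\bar{\boldsymbol{y}}_j)^\top$, assumed invertible. GO-LDA discriminant directions are defined recursively: $\boldsymbol{u}_1$ is the (normalised) eigenvector corresponding to the largest eigenvalue of the generalised eigenvalue problem $\boldsymbol{S}_{\rm B}\boldsymbol{v}=\lambda\boldsymbol{S}_{\rm W}\boldsymbol{v}$; for $k\ge2$, $\boldsymbol{u}_k$ is a (normalised) maximiser of $\mathcal{R}(\boldsymbol{u})$ subject to $\boldsymbol{u}$ being orthogonal to each of $\boldsymbol{u}_1,\ldots,\boldsymbol{u}_{k-1}$.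 *)

theory Defs
  imports "Jordan_Normal_Form.Matrix"
begin

text \<open>Labelled data: C classes, class j (j < C) has Nc j samples y j k (k < Nc j),
  each a vector of dimension M.\<close>

definition class_mean :: "nat \<Rightarrow> (nat \<Rightarrow> nat) \<Rightarrow> (nat \<Rightarrow> nat \<Rightarrow> real vec) \<Rightarrow> nat \<Rightarrow> real vec" where
  "class_mean M Nc y j = vec M (\<lambda>a. (\<Sum>k<Nc j. y j k $ a) / real (Nc j))"

definition overall_mean :: "nat \<Rightarrow> nat \<Rightarrow> (nat \<Rightarrow> nat) \<Rightarrow> (nat \<Rightarrow> nat \<Rightarrow> real vec) \<Rightarrow> real vec" where
  "overall_mean M C Nc y = vec M (\<lambda>a. (\<Sum>j<C. \<Sum>k<Nc j. y j k $ a) / real (\<Sum>j<C. Nc j))"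

definition between_scatter :: "nat \<Rightarrow> nat \<Rightarrow> (nat \<Rightarrow> nat) \<Rightarrow> (nat \<Rightarrow> nat \<Rightarrow> real vec) \<Rightarrow> real mat" where
  "between_scatter M C Nc y = mat M M (\<lambda>(a,b). \<Sum>j<C.
      (class_mean M Nc y j $ a - overall_mean M C Nc y $ a) *
      (class_mean M Nc y j $ b - overall_mean M C Nc y $ b))"

definition within_scatter :: "nat \<Rightarrow> nat \<Rightarrow> (nat \<Rightarrow> nat) \<Rightarrow> (nat \<Rightarrow> nat \<Rightarrow> real vec) \<Rightarrow> real mat" where
  "within_scatter M C Nc y = mat M M (\<lambda>(a,b). \<Sum>j<C. \<Sum>k<Nc j.
      (y j k $ a - class_mean M Nc y j $ a) * (y j k $ b - class_mean M Nc y j $ b))"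

text \<open>Inverse of a square matrix (meaningful when the matrix is invertible).\<close>
definition minv :: "real mat \<Rightarrow> real mat" where
  "minv A = (SOME B. B \<in> carrier_mat (dim_row A) (dim_row A) \<and>
      A * B = 1\<^sub>m (dim_row A) \<and> B * A = 1\<^sub>m (dim_row A))"

definition rayleigh :: "real mat \<Rightarrow> real mat \<Rightarrow> real vec \<Rightarrow> real" where
  "rayleigh SB SW u = (u \<bullet> (SB *\<^sub>v u)) / (u \<bullet> (SW *\<^sub>v u))"

definition gen_eigenpair :: "nat \<Rightarrow> real mat \<Rightarrow> real mat \<Rightarrow> real \<Rightarrow> real vec \<Rightarrow> bool" where
  "gen_eigenpair M A B mu v \<longleftrightarrow> v \<in> carrier_vec M \<and> v \<noteq> 0\<^sub>v M \<and> A *\<^sub>v v = mu \<cdot>\<^sub>v (B *\<^sub>v v)"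

definition largest_gen_eigvec :: "nat \<Rightarrow> real mat \<Rightarrow> real mat \<Rightarrow> real vec \<Rightarrow> bool" where
  "largest_gen_eigvec M A B v \<longleftrightarrow>
     (\<exists>mu. gen_eigenpair M A B mu v \<and> (\<forall>mu' w. gen_eigenpair M A B mu' w \<longrightarrow> mu' \<le> mu))"

definition constrained_max :: "nat \<Rightarrow> real mat \<Rightarrow> real mat \<Rightarrow> real vec set \<Rightarrow> real vec \<Rightarrow> bool" where
  "constrained_max M SB SW W u \<longleftrightarrow>
     u \<in> carrier_vec M \<and> u \<noteq> 0\<^sub>v M \<and> (\<forall>w\<in>W. u \<bullet> w = 0) \<and>
     (\<forall>v. v \<in> carrier_vec M \<and> v \<noteq> 0\<^sub>v M \<and> (\<forall>w\<in>W. v \<bullet> w = 0)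
           \<longrightarrow> rayleigh SB SW v \<le> rayleigh SB SW u)"

text \<open>u 0, ..., u (m-1) are the first m GO-LDA directions (paper's u_1,...,u_m).\<close>
definition golda_dirs :: "nat \<Rightarrow> real mat \<Rightarrow> real mat \<Rightarrow> (nat \<Rightarrow> real vec) \<Rightarrow> nat \<Rightarrow> bool" where
  "golda_dirs M SB SW u m \<longleftrightarrow>
     (\<forall>i<m. u i \<in> carrier_vec M \<and> u i \<bullet> u i = 1 \<and>
        (i = 0 \<longrightarrow> largest_gen_eigvec M SB SW (u 0)) \<and>
        (0 < i \<longrightarrow> constrained_max M SB SW (u ` {..<i}) (u i)))"

end

theory Submission
  imports Defs "Jordan_Normal_Form.Determinant"
begin

(* Write W = SW^-1, P = SB - U T^-1 B and lam = R(u_n). Both scatter matrices are positive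
   semidefinite, so the invertible SW is positive definite; moreover B = U^T W SB and
   T = U^T W U, with T invertible. Hence U^T W P = 0: an eigenvector P v = mu SW v with mu <> 0
   is orthogonal to u_1, ..., u_{n-1}, and for such v the quadratic forms of P and SB agree, so
   mu = R(v) <= lam (and mu = 0 <= lam trivially).
   Conversely, maximality of u_n gives the first-order condition w^T SB u_n = lam w^T SW u_n for
   every w orthogonal to the u_i. Applied to w = W (P u_n - lam SW u_n), which is such a vector,
   it yields w^T SW w = 0, so P u_n = lam SW u_n. *)

lemma mult_mat_vec_carrier_vec[simp]: "dim_row A = n \<Longrightarrow> A *\<^sub>v v \<in> carrier_vec n"
  by (intro carrier_vecI) simp

lemma times_mat_carrier_mat[simp]: "dim_row A = nr \<Longrightarrow> dim_col B = nc \<Longrightarrow> A * B \<in> carrier_mat nr nc"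
  by (intro carrier_matI) simp_all

lemma mult_mat_vec_zero[simp]: "dim_col A = n \<Longrightarrow> A *\<^sub>v 0\<^sub>v n = 0\<^sub>v (dim_row A)"
  by (intro eq_vecI) auto

lemma smult_zero_vec[simp]: "k \<cdot>\<^sub>v 0\<^sub>v n = (0\<^sub>v n :: 'a :: semiring_0 vec)"
  by (intro eq_vecI) auto

lemma minv_inverse:
  assumes A: "A \<in> carrier_mat n n" and inv: "invertible_mat A"
  shows "minv A \<in> carrier_mat n n" "A * minv A = 1\<^sub>m n" "minv A * A = 1\<^sub>m n"
proof -
  obtain B where AB: "A * B = 1\<^sub>m n" and BA: "B * A = 1\<^sub>m (dim_row B)"
    using A inv unfolding invertible_mat_def inverts_mat_def by auto
  have "dim_col B = n" using arg_cong[OF AB, of dim_col] by simp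
  moreover have "dim_row B = n" using A arg_cong[OF BA, of dim_col] by simp
  ultimately have "\<exists>B. B \<in> carrier_mat (dim_row A) (dim_row A) \<and>
      A * B = 1\<^sub>m (dim_row A) \<and> B * A = 1\<^sub>m (dim_row A)"
    using A AB BA by (intro exI[of _ B]) auto
  from someI_ex[OF this] show "minv A \<in> carrier_mat n n" "A * minv A = 1\<^sub>m n" "minv A * A = 1\<^sub>m n"
    using A unfolding minv_def by auto
qed

lemma invertible_mat_if_trivial_kernel:
  fixes A :: "'a :: field mat"
  assumes A: "A \<in> carrier_mat n n"
    and ker: "\<And>v. v \<in> carrier_vec n \<Longrightarrow> A *\<^sub>v v = 0\<^sub>v n \<Longrightarrow> v = 0\<^sub>v n"
  shows "invertible_mat A"
proof -
  have "det A \<noteq> 0" using det_0_iff_vec_prod_zero_field[OF A] ker by blast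
  from det_non_zero_imp_unit[OF A this, of "()"]
  obtain B where "B \<in> carrier_mat n n" "A * B = 1\<^sub>m n" "B * A = 1\<^sub>m n"
    unfolding Units_def ring_mat_def by auto
  with A show ?thesis unfolding invertible_mat_def inverts_mat_def by auto
qed

lemma minus_vec_eq_0_iff:
  fixes v w :: "'a :: ab_group_add vec"
  assumes "v \<in> carrier_vec n" "w \<in> carrier_vec n"
  shows "v - w = 0\<^sub>v n \<longleftrightarrow> v = w"
proof
  assume "v - w = 0\<^sub>v n"
  then have "\<And>i. i < n \<Longrightarrow> v $ i - w $ i = 0"
    using assms by (metis carrier_vecD index_minus_vec(1) index_zero_vec(1))
  with assms show "v = w" by (intro eq_vecI) auto
qed (use assms in simp)

lemma scalar_prod_self_eq_0_iff:
  fixes v :: "real vec"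
  assumes "v \<in> carrier_vec n"
  shows "v \<bullet> v = 0 \<longleftrightarrow> v = 0\<^sub>v n"
  using conjugate_square_eq_0_vec[OF assms] by simp

lemma linear_coeff_eq_0_if_quadratic_nonpos:
  fixes e k :: real
  assumes "\<And>t. 2 * t * e + t\<^sup>2 * k \<le> 0"
  shows "e = 0"
proof -
  define K where "K = \<bar>k\<bar> + 1"
  have K: "K > 0" "2 * K + k > 0" unfolding K_def by auto
  have "(2 * (e / K) * e + (e / K)\<^sup>2 * k) * K\<^sup>2 = e\<^sup>2 * (2 * K + k)"
    using K by (simp add: field_simps power2_eq_square)
  moreover have "(2 * (e / K) * e + (e / K)\<^sup>2 * k) * K\<^sup>2 \<le> 0"
    using assms[of "e / K"] by (simp add: mult_nonpos_nonneg)
  ultimately have "e\<^sup>2 \<le> 0" using K by (simp add: mult_le_0_iff)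
  then show ?thesis by simp
qed

lemma sym_mat_scalar_prod_comm:
  fixes A :: "'a :: comm_ring mat"
  assumes A: "A \<in> carrier_mat n n" and sym: "A\<^sup>T = A"
    and x: "x \<in> carrier_vec n" and y: "y \<in> carrier_vec n"
  shows "x \<bullet> (A *\<^sub>v y) = y \<bullet> (A *\<^sub>v x)"
proof -
  have "x \<bullet> (A *\<^sub>v y) = (A\<^sup>T *\<^sub>v x) \<bullet> y"
    using transpose_vec_mult_scalar[OF A y x] by simp
  also have "\<dots> = y \<bullet> (A *\<^sub>v x)" using sym A x y by (simp add: comm_scalar_prod[of _ n])
  finally show ?thesis .
qed

lemma sym_mat_quadratic_form_add_smult:
  fixes A :: "real mat"
  assumes A: "A \<in> carrier_mat n n" and sym: "A\<^sup>T = A"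
    and x: "x \<in> carrier_vec n" and w: "w \<in> carrier_vec n"
  shows "(x + t \<cdot>\<^sub>v w) \<bullet> (A *\<^sub>v (x + t \<cdot>\<^sub>v w)) =
    x \<bullet> (A *\<^sub>v x) + 2 * t * (w \<bullet> (A *\<^sub>v x)) + t\<^sup>2 * (w \<bullet> (A *\<^sub>v w))"
proof -
  have "(x + t \<cdot>\<^sub>v w) \<bullet> (A *\<^sub>v (x + t \<cdot>\<^sub>v w)) =
    x \<bullet> (A *\<^sub>v x) + t * (x \<bullet> (A *\<^sub>v w)) + t * (w \<bullet> (A *\<^sub>v x)) + t * t * (w \<bullet> (A *\<^sub>v w))"
    using A x w by (simp add: mult_add_distrib_mat_vec[OF A] mult_mat_vec[OF A]
        add_scalar_prod_distrib[of _ n] scalar_prod_add_distrib[of _ n] algebra_simps)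
  then show ?thesis
    using sym_mat_scalar_prod_comm[OF A sym x w] by (simp add: power2_eq_square algebra_simps)
qed

lemma quadratic_forms_stationary:
  fixes A B :: "real mat"
  assumes A: "A \<in> carrier_mat n n" "A\<^sup>T = A"
    and B: "B \<in> carrier_mat n n" "B\<^sup>T = B"
    and x: "x \<in> carrier_vec n" and w: "w \<in> carrier_vec n"
    and eq: "x \<bullet> (A *\<^sub>v x) = c * (x \<bullet> (B *\<^sub>v x))"
    and le: "\<And>t. (x + t \<cdot>\<^sub>v w) \<bullet> (A *\<^sub>v (x + t \<cdot>\<^sub>v w))
                    \<le> c * ((x + t \<cdot>\<^sub>v w) \<bullet> (B *\<^sub>v (x + t \<cdot>\<^sub>v w)))"
  shows "w \<bullet> (A *\<^sub>v x) = c * (w \<bullet> (B *\<^sub>v x))"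
proof -
  have "2 * t * (w \<bullet> (A *\<^sub>v x) - c * (w \<bullet> (B *\<^sub>v x)))
      + t\<^sup>2 * (w \<bullet> (A *\<^sub>v w) - c * (w \<bullet> (B *\<^sub>v w))) \<le> 0"
    for t
  proof -
    have "x \<bullet> (A *\<^sub>v x) + 2 * t * (w \<bullet> (A *\<^sub>v x)) + t\<^sup>2 * (w \<bullet> (A *\<^sub>v w))
      \<le> c * (x \<bullet> (B *\<^sub>v x) + 2 * t * (w \<bullet> (B *\<^sub>v x)) + t\<^sup>2 * (w \<bullet> (B *\<^sub>v w)))"
      using le[of t] unfolding sym_mat_quadratic_form_add_smult[OF A x w]
        sym_mat_quadratic_form_add_smult[OF B x w] .
    moreover have "c * (x \<bullet> (B *\<^sub>v x) + 2 * t * (w \<bullet> (B *\<^sub>v x)) + t\<^sup>2 * (w \<bullet> (B *\<^sub>v w)))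
      = c * (x \<bullet> (B *\<^sub>v x)) + 2 * t * (c * (w \<bullet> (B *\<^sub>v x))) + t\<^sup>2 * (c * (w \<bullet> (B *\<^sub>v w)))"
      by (simp add: algebra_simps)
    ultimately show ?thesis using eq by (simp only: right_diff_distrib)
  qed
  then have "w \<bullet> (A *\<^sub>v x) - c * (w \<bullet> (B *\<^sub>v x)) = 0"
    by (rule linear_coeff_eq_0_if_quadratic_nonpos)
  then show ?thesis by simp
qed

lemma psd_quadratic_form_eq_0_imp_mult_eq_0:
  fixes A :: "real mat"
  assumes A: "A \<in> carrier_mat n n" "A\<^sup>T = A"
    and psd: "\<And>v. v \<in> carrier_vec n \<Longrightarrow> 0 \<le> v \<bullet> (A *\<^sub>v v)"
    and x: "x \<in> carrier_vec n" and x0: "x \<bullet> (A *\<^sub>v x) = 0"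
  shows "A *\<^sub>v x = 0\<^sub>v n"
proof -
  define w where "w = A *\<^sub>v x"
  have w: "w \<in> carrier_vec n" unfolding w_def using A(1) x by simp
  have nonneg: "0 \<le> x \<bullet> (A *\<^sub>v x) + 2 * t * (w \<bullet> (A *\<^sub>v x)) + t\<^sup>2 * (w \<bullet> (A *\<^sub>v w))" for t
    using psd[of "x + t \<cdot>\<^sub>v w"] x w unfolding sym_mat_quadratic_form_add_smult[OF A x w] by simp
  have "2 * t * - (w \<bullet> w) + t\<^sup>2 * - (w \<bullet> (A *\<^sub>v w)) \<le> 0" for t
    using nonneg[of t] x0 unfolding w_def by simp
  then have "- (w \<bullet> w) = 0" by (rule linear_coeff_eq_0_if_quadratic_nonpos)
  then show ?thesis using scalar_prod_self_eq_0_iff[OF w] unfolding w_def by simp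
qed

definition scatter_mat :: "nat \<Rightarrow> 'i set \<Rightarrow> ('i \<Rightarrow> nat \<Rightarrow> real) \<Rightarrow> real mat" where
  "scatter_mat n I f = mat n n (\<lambda>(a, b). \<Sum>i\<in>I. f i a * f i b)"

lemma scatter_mat_carrier: "scatter_mat n I f \<in> carrier_mat n n"
  unfolding scatter_mat_def by simp

lemma transpose_scatter_mat: "(scatter_mat n I f)\<^sup>T = scatter_mat n I f"
  unfolding scatter_mat_def by (rule eq_matI) (auto simp: mult.commute)

lemma scatter_mat_quadratic_form:
  assumes x: "x \<in> carrier_vec n"
  shows "x \<bullet> (scatter_mat n I f *\<^sub>v x) = (\<Sum>i\<in>I. (\<Sum>a<n. f i a * x $ a)\<^sup>2)"
proof -
  have "x \<bullet> (scatter_mat n I f *\<^sub>v x) = (\<Sum>a<n. x $ a * (\<Sum>b<n. (\<Sum>i\<in>I. f i a * f i b) * x $ b))"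
    using x by (simp add: scatter_mat_def scalar_prod_def row_def atLeast0LessThan)
  also have "\<dots> = (\<Sum>a<n. \<Sum>b<n. \<Sum>i\<in>I. (f i a * x $ a) * (f i b * x $ b))"
    by (simp add: sum_distrib_left sum_distrib_right mult_ac)
  also have "\<dots> = (\<Sum>i\<in>I. \<Sum>a<n. \<Sum>b<n. (f i a * x $ a) * (f i b * x $ b))"
    by (subst sum.swap) (simp add: sum.swap[of _ "{..<n}" I])
  also have "\<dots> = (\<Sum>i\<in>I. (\<Sum>a<n. f i a * x $ a)\<^sup>2)"
    by (simp add: power2_eq_square sum_product)
  finally show ?thesis .
qed

lemma scatter_mat_psd: "x \<in> carrier_vec n \<Longrightarrow> 0 \<le> x \<bullet> (scatter_mat n I f *\<^sub>v x)"
  by (simp add: scatter_mat_quadratic_form sum_nonneg)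

lemma between_scatter_eq_scatter_mat:
  "between_scatter M C Nc y =
    scatter_mat M {..<C} (\<lambda>j a. class_mean M Nc y j $ a - overall_mean M C Nc y $ a)"
  unfolding between_scatter_def scatter_mat_def ..

lemma within_scatter_eq_scatter_mat:
  "within_scatter M C Nc y =
    scatter_mat M (SIGMA j:{..<C}. {..<Nc j}) (\<lambda>(j, k) a. y j k $ a - class_mean M Nc y j $ a)"
  unfolding within_scatter_def scatter_mat_def
  by (rule eq_matI) (auto simp: sum.Sigma split_def)

lemma golda_dirs_carrier: "golda_dirs M SB SW u m \<Longrightarrow> i < m \<Longrightarrow> u i \<in> carrier_vec M"
  unfolding golda_dirs_def by blast

lemma golda_dirs_orthonormal:
  assumes dirs: "golda_dirs M SB SW u m" and "i < m" "j < m"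
  shows "u i \<bullet> u j = (if i = j then 1 else 0)"
proof -
  have orth: "u l \<bullet> u k = 0" if "k < l" "l < m" for k l
    using dirs that unfolding golda_dirs_def constrained_max_def by auto
  consider "i = j" | "i < j" | "j < i" by linarith
  then show ?thesis
  proof cases
    case 1
    then show ?thesis using dirs \<open>j < m\<close> unfolding golda_dirs_def by auto
  next
    case 2
    then show ?thesis using orth[of i j] \<open>j < m\<close> comm_scalar_prod[of "u i" M "u j"]
        golda_dirs_carrier[OF dirs] by auto
  next
    case 3
    then show ?thesis using orth[of j i] \<open>i < m\<close> by auto
  qed
qed

locale golda_step =
  fixes M m :: nat and SB SW :: "real mat" and u :: "nat \<Rightarrow> real vec"
  assumes SB_carrier: "SB \<in> carrier_mat M M" and SB_sym: "SB\<^sup>T = SB"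
    and SB_psd: "\<And>x. x \<in> carrier_vec M \<Longrightarrow> 0 \<le> x \<bullet> (SB *\<^sub>v x)"
    and SW_carrier: "SW \<in> carrier_mat M M" and SW_sym: "SW\<^sup>T = SW"
    and SW_psd: "\<And>x. x \<in> carrier_vec M \<Longrightarrow> 0 \<le> x \<bullet> (SW *\<^sub>v x)"
    and SW_invertible: "invertible_mat SW"
    and u_carrier: "\<And>i. i < m \<Longrightarrow> u i \<in> carrier_vec M"
    and u_orthonormal: "\<And>i j. i < m \<Longrightarrow> j < m \<Longrightarrow> u i \<bullet> u j = (if i = j then 1 else 0)"
begin

definition U :: "real mat" where
  "U = mat M m (\<lambda>(a, i). u i $ a)"

definition B :: "real mat" where
  "B = mat m M (\<lambda>(i, a). u i \<bullet> col (minv SW * SB) a)"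

definition T :: "real mat" where
  "T = mat m m (\<lambda>(i, j). u i \<bullet> (minv SW *\<^sub>v u j))"

definition SB_deflated :: "real mat" where
  "SB_deflated = SB - U * minv T * B"

declare SB_carrier[simp] SW_carrier[simp]
lemmas dim_SB[simp] = carrier_matD[OF SB_carrier]
lemmas dim_SW[simp] = carrier_matD[OF SW_carrier]

lemma minv_SW_carrier[simp]: "minv SW \<in> carrier_mat M M"
  and SW_mult_minv_SW: "SW * minv SW = 1\<^sub>m M"
  and minv_SW_mult_SW: "minv SW * SW = 1\<^sub>m M"
  using minv_inverse[OF SW_carrier SW_invertible] by auto

lemmas dim_minv_SW[simp] = carrier_matD[OF minv_SW_carrier]

lemma minv_SW_mult_SW_vec: "x \<in> carrier_vec M \<Longrightarrow> minv SW *\<^sub>v (SW *\<^sub>v x) = x"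
  using assoc_mult_mat_vec[of "minv SW" M M SW M x] by (simp add: minv_SW_mult_SW)

lemma SW_mult_minv_SW_vec: "x \<in> carrier_vec M \<Longrightarrow> SW *\<^sub>v (minv SW *\<^sub>v x) = x"
  using assoc_mult_mat_vec[of SW M M "minv SW" M x] by (simp add: SW_mult_minv_SW)

lemma SW_quadratic_form_eq_0:
  assumes x: "x \<in> carrier_vec M" and "x \<bullet> (SW *\<^sub>v x) = 0"
  shows "x = 0\<^sub>v M"
proof -
  have "SW *\<^sub>v x = 0\<^sub>v M"
    using psd_quadratic_form_eq_0_imp_mult_eq_0[OF SW_carrier SW_sym SW_psd x] assms by simp
  then have "minv SW *\<^sub>v (SW *\<^sub>v x) = 0\<^sub>v M"
    by simp
  then show ?thesis using minv_SW_mult_SW_vec[OF x] by simp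
qed

lemma SW_pos_def: "x \<in> carrier_vec M \<Longrightarrow> x \<noteq> 0\<^sub>v M \<Longrightarrow> 0 < x \<bullet> (SW *\<^sub>v x)"
  using SW_psd SW_quadratic_form_eq_0 by (metis less_eq_real_def)

lemma dim_row_U[simp]: "dim_row U = M" and dim_col_U[simp]: "dim_col U = m"
  unfolding U_def by simp_all

lemma U_carrier[simp]: "U \<in> carrier_mat M m"
  by (simp add: carrier_matI)

lemma transpose_U_carrier[simp]: "U\<^sup>T \<in> carrier_mat m M"
  by simp

lemma col_U: assumes "i < m" shows "col U i = u i"
  using u_carrier[OF assms] assms unfolding U_def by (intro eq_vecI) auto

lemma row_transpose_U: "i < m \<Longrightarrow> row U\<^sup>T i = u i"
  using col_U by simp

lemma transpose_U_mult_vec_eq_0_iff: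
  assumes x: "x \<in> carrier_vec M"
  shows "U\<^sup>T *\<^sub>v x = 0\<^sub>v m \<longleftrightarrow> (\<forall>w\<in>u ` {..<m}. x \<bullet> w = 0)"
proof -
  have "(U\<^sup>T *\<^sub>v x) $ i = x \<bullet> u i" if "i < m" for i
    using that x u_carrier row_transpose_U comm_scalar_prod[of x M] by simp
  then show ?thesis
    by (auto simp: vec_eq_iff simp del: index_mult_mat_vec)
qed

lemma scalar_prod_U_mult_vec:
  "x \<in> carrier_vec M \<Longrightarrow> c \<in> carrier_vec m \<Longrightarrow> x \<bullet> (U *\<^sub>v c) = (U\<^sup>T *\<^sub>v x) \<bullet> c"
  using transpose_vec_mult_scalar[OF U_carrier] by simp

lemma transpose_U_mult_u: "j < m \<Longrightarrow> U\<^sup>T *\<^sub>v u j = unit_vec m j"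
  using row_transpose_U u_orthonormal by (intro eq_vecI) (auto simp: unit_vec_def)

lemma dim_row_B[simp]: "dim_row B = m" and dim_col_B[simp]: "dim_col B = M"
  unfolding B_def by simp_all

lemma B_carrier[simp]: "B \<in> carrier_mat m M"
  by (simp add: carrier_matI)

lemma T_carrier[simp]: "T \<in> carrier_mat m m"
  unfolding T_def by simp

lemma B_eq: "B = U\<^sup>T * (minv SW * SB)"
  using row_transpose_U unfolding B_def by (intro eq_matI) auto

lemma T_eq: "T = U\<^sup>T * (minv SW * U)"
  unfolding T_def
  by (intro eq_matI) (auto simp: row_transpose_U col_U col_mult2[OF minv_SW_carrier U_carrier])

lemma T_mult_vec:
  assumes c: "c \<in> carrier_vec m"
  shows "T *\<^sub>v c = U\<^sup>T *\<^sub>v (minv SW *\<^sub>v (U *\<^sub>v c))"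
proof -
  have "T *\<^sub>v c = U\<^sup>T *\<^sub>v ((minv SW * U) *\<^sub>v c)"
    unfolding T_eq by (rule assoc_mult_mat_vec[OF transpose_U_carrier _ c]) simp_all
  also have "(minv SW * U) *\<^sub>v c = minv SW *\<^sub>v (U *\<^sub>v c)"
    by (rule assoc_mult_mat_vec[OF minv_SW_carrier U_carrier c])
  finally show ?thesis .
qed

lemma T_invertible: "invertible_mat T"
proof (rule invertible_mat_if_trivial_kernel[OF T_carrier])
  fix c assume c: "c \<in> carrier_vec m" and Tc: "T *\<^sub>v c = 0\<^sub>v m"
  define w where "w = minv SW *\<^sub>v (U *\<^sub>v c)"
  have w: "w \<in> carrier_vec M" unfolding w_def by simp
  have Uc: "U *\<^sub>v c = SW *\<^sub>v w"
    unfolding w_def by (simp add: SW_mult_minv_SW_vec)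
  have "w \<bullet> (SW *\<^sub>v w) = (U\<^sup>T *\<^sub>v w) \<bullet> c"
    using scalar_prod_U_mult_vec[OF w c] unfolding Uc .
  also have "\<dots> = 0" using Tc T_mult_vec[OF c] c unfolding w_def by simp
  finally have "w = 0\<^sub>v M" using w SW_quadratic_form_eq_0 by simp
  then have "U *\<^sub>v c = 0\<^sub>v M" using Uc by (simp add: eq_vecI)
  then have "c $ j = 0" if "j < m" for j
    using scalar_prod_U_mult_vec[OF u_carrier c, of j] transpose_U_mult_u[of j] u_carrier[of j] that c
    by simp
  then show "c = 0\<^sub>v m" using c by (intro eq_vecI) auto
qed

lemma minv_T_carrier[simp]: "minv T \<in> carrier_mat m m"
  and T_mult_minv_T: "T * minv T = 1\<^sub>m m"
  using minv_inverse[OF T_carrier T_invertible] by auto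

lemmas dim_minv_T[simp] = carrier_matD[OF minv_T_carrier]

lemma SB_deflated_carrier[simp]: "SB_deflated \<in> carrier_mat M M"
  unfolding SB_deflated_def by (intro minus_carrier_mat mult_carrier_mat) auto

lemmas dim_SB_deflated[simp] = carrier_matD[OF SB_deflated_carrier]

lemma SB_deflated_mult_vec:
  assumes x: "x \<in> carrier_vec M"
  shows "SB_deflated *\<^sub>v x =
    SB *\<^sub>v x - U *\<^sub>v (minv T *\<^sub>v (U\<^sup>T *\<^sub>v (minv SW *\<^sub>v (SB *\<^sub>v x))))"
proof -
  have "SB_deflated *\<^sub>v x = SB *\<^sub>v x - (U * minv T * B) *\<^sub>v x"
    unfolding SB_deflated_def by (rule minus_mult_distrib_mat_vec[OF SB_carrier _ x]) simp
  also have "(U * minv T * B) *\<^sub>v x = U *\<^sub>v (minv T *\<^sub>v (B *\<^sub>v x))"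
    using x by (simp add: assoc_mult_mat_vec[of _ M m _ M] assoc_mult_mat_vec[OF U_carrier minv_T_carrier])
  finally show ?thesis
    unfolding B_eq using x by (simp add: assoc_mult_mat_vec[of _ m M _ M] assoc_mult_mat_vec[of _ M M _ M])
qed

lemma transpose_U_minv_SW_SB_deflated:
  assumes x: "x \<in> carrier_vec M"
  shows "U\<^sup>T *\<^sub>v (minv SW *\<^sub>v (SB_deflated *\<^sub>v x)) = 0\<^sub>v m"
proof -
  define g where "g = U\<^sup>T *\<^sub>v (minv SW *\<^sub>v (SB *\<^sub>v x))"
  have g: "g \<in> carrier_vec m" unfolding g_def using x by simp
  have "U\<^sup>T *\<^sub>v (minv SW *\<^sub>v (SB_deflated *\<^sub>v x)) = g - T *\<^sub>v (minv T *\<^sub>v g)"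
    unfolding SB_deflated_mult_vec[OF x] g_def[symmetric] T_mult_vec[OF mult_mat_vec_carrier[OF minv_T_carrier g]]
    using g x by (simp add: mult_minus_distrib_mat_vec[of _ M M] mult_minus_distrib_mat_vec[of _ m M] g_def)
  also have "T *\<^sub>v (minv T *\<^sub>v g) = g"
    using assoc_mult_mat_vec[OF T_carrier minv_T_carrier g] g by (simp add: T_mult_minv_T)
  finally show ?thesis using g by simp
qed

lemma scalar_prod_SB_deflated:
  assumes x: "x \<in> carrier_vec M" and v: "v \<in> carrier_vec M" and Uv: "U\<^sup>T *\<^sub>v v = 0\<^sub>v m"
  shows "v \<bullet> (SB_deflated *\<^sub>v x) = v \<bullet> (SB *\<^sub>v x)"
  unfolding SB_deflated_mult_vec[OF x]
  using x v by (simp add: scalar_prod_minus_distrib[of v M] scalar_prod_U_mult_vec Uv)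

context
  fixes v0 :: "real vec"
  assumes v0_max: "constrained_max M SB SW (u ` {..<m}) v0"
begin

lemma v0_carrier: "v0 \<in> carrier_vec M" and v0_nonzero: "v0 \<noteq> 0\<^sub>v M"
  and transpose_U_mult_v0: "U\<^sup>T *\<^sub>v v0 = 0\<^sub>v m"
  using v0_max transpose_U_mult_vec_eq_0_iff unfolding constrained_max_def by auto

lemma quadratic_form_le_rayleigh_v0:
  assumes v: "v \<in> carrier_vec M" and Uv: "U\<^sup>T *\<^sub>v v = 0\<^sub>v m"
  shows "v \<bullet> (SB *\<^sub>v v) \<le> rayleigh SB SW v0 * (v \<bullet> (SW *\<^sub>v v))"
proof (cases "v = 0\<^sub>v M")
  case False
  then have "rayleigh SB SW v \<le> rayleigh SB SW v0"
    using v0_max v Uv transpose_U_mult_vec_eq_0_iff unfolding constrained_max_def by blast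
  then show ?thesis
    using SW_pos_def[OF v False] unfolding rayleigh_def by (simp add: pos_divide_le_eq)
qed simp

lemma rayleigh_v0_quadratic_form: "v0 \<bullet> (SB *\<^sub>v v0) = rayleigh SB SW v0 * (v0 \<bullet> (SW *\<^sub>v v0))"
  using SW_pos_def[OF v0_carrier v0_nonzero] unfolding rayleigh_def by simp

lemma rayleigh_v0_nonneg: "0 \<le> rayleigh SB SW v0"
  using SB_psd[OF v0_carrier] SW_psd[OF v0_carrier] unfolding rayleigh_def by simp

lemma rayleigh_v0_stationary:
  assumes w: "w \<in> carrier_vec M" and Uw: "U\<^sup>T *\<^sub>v w = 0\<^sub>v m"
  shows "w \<bullet> (SB *\<^sub>v v0) = rayleigh SB SW v0 * (w \<bullet> (SW *\<^sub>v v0))"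
proof (rule quadratic_forms_stationary[OF SB_carrier SB_sym SW_carrier SW_sym v0_carrier w
      rayleigh_v0_quadratic_form])
  fix t :: real
  have "U\<^sup>T *\<^sub>v (v0 + t \<cdot>\<^sub>v w) = U\<^sup>T *\<^sub>v v0 + t \<cdot>\<^sub>v (U\<^sup>T *\<^sub>v w)"
    using v0_carrier w by (simp add: mult_add_distrib_mat_vec[of _ m M] mult_mat_vec[OF transpose_U_carrier w])
  then have "U\<^sup>T *\<^sub>v (v0 + t \<cdot>\<^sub>v w) = 0\<^sub>v m"
    using transpose_U_mult_v0 Uw by simp
  then show "(v0 + t \<cdot>\<^sub>v w) \<bullet> (SB *\<^sub>v (v0 + t \<cdot>\<^sub>v w))
      \<le> rayleigh SB SW v0 * ((v0 + t \<cdot>\<^sub>v w) \<bullet> (SW *\<^sub>v (v0 + t \<cdot>\<^sub>v w)))"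
    using v0_carrier w by (intro quadratic_form_le_rayleigh_v0) simp_all
qed

lemma gen_eigenpair_SB_deflated_v0: "gen_eigenpair M SB_deflated SW (rayleigh SB SW v0) v0"
proof -
  let ?lam = "rayleigh SB SW v0"
  define z where "z = SB_deflated *\<^sub>v v0 - ?lam \<cdot>\<^sub>v (SW *\<^sub>v v0)"
  define w where "w = minv SW *\<^sub>v z"
  have z: "z \<in> carrier_vec M" and w: "w \<in> carrier_vec M"
    unfolding z_def w_def by simp_all
  have z_eq: "z = SW *\<^sub>v w"
    unfolding w_def using SW_mult_minv_SW_vec[OF z] by simp
  have "w = minv SW *\<^sub>v (SB_deflated *\<^sub>v v0) - ?lam \<cdot>\<^sub>v v0"
    unfolding w_def z_def using v0_carrier
    by (simp add: mult_minus_distrib_mat_vec[of _ M M] mult_mat_vec[of _ M M] minv_SW_mult_SW_vec)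
  then have Uw: "U\<^sup>T *\<^sub>v w = 0\<^sub>v m"
    using v0_carrier transpose_U_minv_SW_SB_deflated[OF v0_carrier] transpose_U_mult_v0
    by (simp add: mult_minus_distrib_mat_vec[of _ m M] mult_mat_vec[of _ m M])
  have "w \<bullet> (SW *\<^sub>v w) = w \<bullet> (SB_deflated *\<^sub>v v0) - ?lam * (w \<bullet> (SW *\<^sub>v v0))"
    unfolding z_eq[symmetric] z_def using w v0_carrier by (simp add: scalar_prod_minus_distrib[of w M])
  also have "\<dots> = 0"
    using scalar_prod_SB_deflated[OF v0_carrier w Uw] rayleigh_v0_stationary[OF w Uw] by simp
  finally have "w = 0\<^sub>v M" using SW_quadratic_form_eq_0[OF w] by simp
  then have "z = 0\<^sub>v M" using z_eq by simp
  then have "SB_deflated *\<^sub>v v0 = ?lam \<cdot>\<^sub>v (SW *\<^sub>v v0)"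
    unfolding z_def by (subst (asm) minus_vec_eq_0_iff) simp_all
  then show ?thesis
    using v0_carrier v0_nonzero unfolding gen_eigenpair_def by simp
qed

lemma gen_eigenvalue_SB_deflated_le:
  assumes "gen_eigenpair M SB_deflated SW \<mu> v"
  shows "\<mu> \<le> rayleigh SB SW v0"
proof (cases "\<mu> = 0")
  case True
  then show ?thesis using rayleigh_v0_nonneg by simp
next
  case False
  from assms have v: "v \<in> carrier_vec M" and v0: "v \<noteq> 0\<^sub>v M"
    and eig: "SB_deflated *\<^sub>v v = \<mu> \<cdot>\<^sub>v (SW *\<^sub>v v)"
    unfolding gen_eigenpair_def by auto
  have "\<mu> \<cdot>\<^sub>v (U\<^sup>T *\<^sub>v v) = 0\<^sub>v m"
    using transpose_U_minv_SW_SB_deflated[OF v] v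
    by (simp add: eig mult_mat_vec[of _ M M] mult_mat_vec[of _ m M] minv_SW_mult_SW_vec)
  then have Uv: "U\<^sup>T *\<^sub>v v = 0\<^sub>v m"
    using False by (auto simp: vec_eq_iff simp del: index_mult_mat_vec)
  have "\<mu> * (v \<bullet> (SW *\<^sub>v v)) = v \<bullet> (SB *\<^sub>v v)"
    using scalar_prod_SB_deflated[OF v v Uv] v by (simp add: eig)
  also have "\<dots> \<le> rayleigh SB SW v0 * (v \<bullet> (SW *\<^sub>v v))"
    by (rule quadratic_form_le_rayleigh_v0[OF v Uv])
  finally show ?thesis using SW_pos_def[OF v v0] by simp
qed

lemma largest_gen_eigvec_SB_deflated: "largest_gen_eigvec M SB_deflated SW v0"
  unfolding largest_gen_eigvec_def
  using gen_eigenpair_SB_deflated_v0 gen_eigenvalue_SB_deflated_le by blast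

end

end

theorem theorem3:
  fixes M C n :: nat and Nc :: "nat \<Rightarrow> nat" and y :: "nat \<Rightarrow> nat \<Rightarrow> real vec"
    and SB SW :: "real mat" and u :: "nat \<Rightarrow> real vec"
  assumes samples: "\<forall>j<C. \<forall>k<Nc j. y j k \<in> carrier_vec M"
    and nonempty: "\<forall>j<C. 0 < Nc j"
    and SB_def: "SB = between_scatter M C Nc y"
    and SW_def: "SW = within_scatter M C Nc y"
    and SW_inv: "invertible_mat SW"
    and n: "2 \<le> n" "n \<le> M"
    and dirs: "golda_dirs M SB SW u (n - 1)"
    and un: "constrained_max M SB SW (u ` {..<n - 1}) (u (n - 1))"
  shows "let U = mat M (n - 1) (\<lambda>(a, i). u i $ a);
             B = mat (n - 1) M (\<lambda>(i, a). u i \<bullet> col (minv SW * SB) a);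
             T = mat (n - 1) (n - 1) (\<lambda>(i, j). u i \<bullet> (minv SW *\<^sub>v u j))
         in largest_gen_eigvec M (SB - U * minv T * B) SW (u (n - 1))"
proof -
  interpret golda_step M "n - 1" SB SW u
  proof
    show "SB \<in> carrier_mat M M" "SB\<^sup>T = SB" "SW \<in> carrier_mat M M" "SW\<^sup>T = SW"
      unfolding SB_def SW_def between_scatter_eq_scatter_mat within_scatter_eq_scatter_mat
      by (simp_all add: scatter_mat_carrier transpose_scatter_mat)
    show "0 \<le> x \<bullet> (SB *\<^sub>v x)" "0 \<le> x \<bullet> (SW *\<^sub>v x)" if "x \<in> carrier_vec M" for x
      unfolding SB_def SW_def between_scatter_eq_scatter_mat within_scatter_eq_scatter_mat
      using that by (simp_all add: scatter_mat_psd)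
  qed (use SW_inv golda_dirs_carrier[OF dirs] golda_dirs_orthonormal[OF dirs] in auto)
  show ?thesis
    using largest_gen_eigvec_SB_deflated[OF un]
    unfolding SB_deflated_def U_def B_def T_def Let_def .
qed

end
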